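(* Let $G=(U\sqcup V,E)$ be a bipartite graph with integer weights $w:E\to\mathbb{Z}$ having a perfect matching, and let $n=|U|=|V|$. Let $0<\epsilon\le 1/(n+1)$, let $M$ be a perfect matching of $G$ and let $\pi_\epsilon:U\to\mathbb{R}$, $p_\epsilon:V\to\mathbb{R}$ satisfy $\pi_\epsilon(u)+p_\epsilon(v)\le w(uv)+\epsilon$ for all $uv\in E$ and $\pi_\epsilon(u)+p_\epsilon(v)=w(uv)$ for all $uv\in M$. Let $t\in\{0,1,\ldots,n\}$ be any integer such that \[ t\neq \big\lceil (n+1)(\lceil p_\epsilon(v)\rceil-p_\epsilon(v))\big\rceil \bmod (n+1)\quad\text{for all } v\in V \] (such $t$ exists). Define $p(v)=\lfloor p_\epsilon(v)+t/(n+1)\rfloor$ for all $v\in V$ and $\pi(u)=w(uv)-p(v)$ for each $uv\in M$. Then $P=(\pi,p)$ is an optimal solution of the dual assignment program \[ \max \sum_{u\in U}\pi(u)+\sum_{v\in V}p(v)\quad\text{subject to}\quad \pi(u)+p(v)\le w(uv)\ \ \forall uv\in E . \]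
   Context: A matching is a set of pairwise vertex-disjoint edges; it is perfect if it covers all vertices. The dual assignment program above is the linear-programming dual of the assignment (minimum weight perfect matching) linear program $\min\sum_{uv\in E}x(uv)w(uv)$ subject to $\sum_{v:uv\in E}x(uv)=1$ for all $u\in U$, $\sum_{u:uv\in E}x(uv)=1$ for all $v\in V$, $x\ge0$. *)

theory Defs
  imports Main "HOL-Library.Disjoint_Sets" Complex_Main
begin

text \<open>Bipartite graph with sides U (type 'u) and V (type 'v), edge set E \<subseteq> U \<times> V.
  The sides are disjoint automatically since they live in different types.\<close>

definition bipartite_graph :: "'u set \<Rightarrow> 'v set \<Rightarrow> ('u \<times> 'v) set \<Rightarrow> bool" where
  "bipartite_graph U V E \<longleftrightarrow> finite U \<and> finite V \<and> E \<subseteq> U \<times> V"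

definition perfect_matching :: "'u set \<Rightarrow> 'v set \<Rightarrow> ('u \<times> 'v) set \<Rightarrow> ('u \<times> 'v) set \<Rightarrow> bool" where
  "perfect_matching U V E M \<longleftrightarrow>
     M \<subseteq> E \<and>
     (\<forall>e\<in>M. \<forall>e'\<in>M. e \<noteq> e' \<longrightarrow> fst e \<noteq> fst e' \<and> snd e \<noteq> snd e') \<and>
     (\<forall>u\<in>U. \<exists>v. (u, v) \<in> M) \<and>
     (\<forall>v\<in>V. \<exists>u. (u, v) \<in> M)"

definition dual_feasible ::
  "('u \<times> 'v) set \<Rightarrow> ('u \<Rightarrow> 'v \<Rightarrow> int) \<Rightarrow> ('u \<Rightarrow> real) \<Rightarrow> ('v \<Rightarrow> real) \<Rightarrow> bool" where
  "dual_feasible E w \<pi> p \<longleftrightarrow> (\<forall>(u, v)\<in>E. \<pi> u + p v \<le> real_of_int (w u v))"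

definition dual_objective :: "'u set \<Rightarrow> 'v set \<Rightarrow> ('u \<Rightarrow> real) \<Rightarrow> ('v \<Rightarrow> real) \<Rightarrow> real" where
  "dual_objective U V \<pi> p = (\<Sum>u\<in>U. \<pi> u) + (\<Sum>v\<in>V. p v)"

definition dual_optimal ::
  "'u set \<Rightarrow> 'v set \<Rightarrow> ('u \<times> 'v) set \<Rightarrow> ('u \<Rightarrow> 'v \<Rightarrow> int) \<Rightarrow> ('u \<Rightarrow> real) \<Rightarrow> ('v \<Rightarrow> real) \<Rightarrow> bool" where
  "dual_optimal U V E w \<pi> p \<longleftrightarrow>
     dual_feasible E w \<pi> p \<and>
     (\<forall>\<pi>' p'. dual_feasible E w \<pi>' p' \<longrightarrow> dual_objective U V \<pi>' p' \<le> dual_objective U V \<pi> p)"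

end

theory Submission
  imports Defs
begin

text \<open>Shifting every \<open>p\<epsilon> v\<close> by \<open>t/(n+1)\<close> moves its fractional part by \<open>t/(n+1)\<close>
  modulo 1; the single forbidden value of \<open>t\<close> for \<open>v\<close> is exactly the one that would bring that
  fractional part below \<open>1/(n+1)\<close>. With all fractional parts at least \<open>\<epsilon>\<close>, rounding the prices
  down and recomputing \<open>\<pi>\<close> along \<open>M\<close> loses less than one unit on every edge, and integrality
  turns the strict gap into feasibility. The resulting integer dual is tight on \<open>M\<close>, so by weak
  duality its objective equals the weight of \<open>M\<close>, which bounds every feasible dual.\<close>

lemma frac_shift_ge:
  fixes x :: real and k :: nat and t :: int
  assumes k: "0 < k" and t: "t \<in> {0..<int k}"
    and t_avoid: "t \<noteq> \<lceil>real k * (of_int \<lceil>x\<rceil> - x)\<rceil> mod int k"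
  shows "1 / real k \<le> frac (x + of_int t / real k)"
proof (rule ccontr)
  define a where "a = x + of_int t / real k"
  define m where "m = \<lceil>x\<rceil> - \<lfloor>a\<rfloor>"
  assume "\<not> ?thesis"
  then have "real k * frac a < 1"
    using k unfolding a_def by (simp add: field_simps)
  moreover have "real k * frac a = of_int t - real k * (of_int \<lceil>x\<rceil> - x) + real k * of_int m"
    using k unfolding a_def m_def frac_def by (simp add: field_simps)
  moreover have "0 \<le> real k * frac a" by simp
  ultimately have "\<lceil>real k * (of_int \<lceil>x\<rceil> - x)\<rceil> = t + int k * m"
    by (intro ceiling_unique) auto
  then have "\<lceil>real k * (of_int \<lceil>x\<rceil> - x)\<rceil> mod int k = t"
    using t by simp
  then show False using t_avoid by simp
qed

lemma dual_objective_eq_sum_perfect_matching: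
  assumes "bipartite_graph U V E" and "perfect_matching U V E M"
  shows "dual_objective U V f g = (\<Sum>e\<in>M. f (fst e) + g (snd e))"
proof -
  have M: "M \<subseteq> U \<times> V"
    using assms unfolding bipartite_graph_def perfect_matching_def by blast
  have "inj_on fst M" "inj_on snd M"
    using assms(2) unfolding perfect_matching_def inj_on_def by blast+
  moreover have "fst ` M = U" "snd ` M = V"
    using assms(2) M unfolding perfect_matching_def by force+
  ultimately have "sum f U = (\<Sum>e\<in>M. f (fst e))" "sum g V = (\<Sum>e\<in>M. g (snd e))"
    by (metis sum.reindex o_apply sum.cong)+
  then show ?thesis
    unfolding dual_objective_def by (simp add: sum.distrib)
qed

lemma dual_objective_le_matching_weight:
  assumes "bipartite_graph U V E" and "perfect_matching U V E M"
    and "dual_feasible E w \<pi> p"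
  shows "dual_objective U V \<pi> p \<le> (\<Sum>(u, v)\<in>M. real_of_int (w u v))"
proof -
  have "\<pi> u + p v \<le> real_of_int (w u v)" if "(u, v) \<in> M" for u v
    using assms(2,3) that unfolding perfect_matching_def dual_feasible_def by blast
  then show ?thesis
    unfolding dual_objective_eq_sum_perfect_matching[OF assms(1,2)]
    by (auto intro: sum_mono)
qed

lemma dual_optimal_if_tight_on_perfect_matching:
  assumes "bipartite_graph U V E" and "perfect_matching U V E M"
    and "dual_feasible E w \<pi> p"
    and tight: "\<forall>(u, v)\<in>M. \<pi> u + p v = real_of_int (w u v)"
  shows "dual_optimal U V E w \<pi> p"
proof -
  have "dual_objective U V \<pi> p = (\<Sum>(u, v)\<in>M. real_of_int (w u v))"
    unfolding dual_objective_eq_sum_perfect_matching[OF assms(1,2)]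
    using tight by (intro sum.cong) auto
  then show ?thesis
    using assms(3) dual_objective_le_matching_weight[OF assms(1,2)]
    unfolding dual_optimal_def by simp
qed

lemma rounded_dual_feasible:
  assumes E: "E \<subseteq> U \<times> V" and M: "perfect_matching U V E M"
    and approx: "\<forall>(u, v)\<in>E. \<pi>\<epsilon> u + p\<epsilon> v \<le> real_of_int (w u v) + \<epsilon>"
    and tight: "\<forall>(u, v)\<in>M. \<pi>\<epsilon> u + p\<epsilon> v = real_of_int (w u v)"
    and gap: "\<forall>v\<in>V. \<epsilon> \<le> frac (p\<epsilon> v + s)"
    and p_def: "\<forall>v\<in>V. p v = \<lfloor>p\<epsilon> v + s\<rfloor>"
    and \<pi>_def: "\<forall>(u, v)\<in>M. \<pi> u = w u v - p v"
  shows "dual_feasible E w (\<lambda>u. real_of_int (\<pi> u)) (\<lambda>v. real_of_int (p v))"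
  unfolding dual_feasible_def
proof clarify
  fix u v assume uv: "(u, v) \<in> E"
  then have "u \<in> U" "v \<in> V" using E by auto
  then obtain v' where uv': "(u, v') \<in> M"
    using M unfolding perfect_matching_def by blast
  then have "v' \<in> V" using M E unfolding perfect_matching_def by blast
  have "real_of_int (p v) \<le> p\<epsilon> v + s - \<epsilon>"
    using gap p_def \<open>v \<in> V\<close> unfolding frac_def by auto
  moreover have "p\<epsilon> v' + s < real_of_int (p v') + 1"
    using p_def \<open>v' \<in> V\<close> by (simp add: floor_less_iff)
  moreover have "p\<epsilon> v - p\<epsilon> v' \<le> real_of_int (w u v) - real_of_int (w u v') + \<epsilon>"
    using approx tight uv uv' by fastforce
  ultimately have "p v < p v' + 1 + w u v - w u v'"
    by linarith
  moreover have "\<pi> u = w u v' - p v'" using \<pi>_def uv' by auto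
  ultimately show "real_of_int (\<pi> u) + real_of_int (p v) \<le> real_of_int (w u v)"
    by linarith
qed

theorem proposition2p8:
  fixes U :: "'u set" and V :: "'v set" and E :: "('u \<times> 'v) set"
    and w :: "'u \<Rightarrow> 'v \<Rightarrow> int" and M :: "('u \<times> 'v) set"
    and n :: nat and \<epsilon> :: real
    and \<pi>\<epsilon> :: "'u \<Rightarrow> real" and p\<epsilon> :: "'v \<Rightarrow> real"
    and t :: int and p :: "'v \<Rightarrow> int" and \<pi> :: "'u \<Rightarrow> int"
  assumes G: "bipartite_graph U V E"
    and has_pm: "\<exists>M0. perfect_matching U V E M0"
    and n_def: "n = card U" and nV: "card V = n"
    and eps_pos: "0 < \<epsilon>" and eps_le: "\<epsilon> \<le> 1 / (real n + 1)"
    and M: "perfect_matching U V E M"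
    and approx: "\<forall>(u, v)\<in>E. \<pi>\<epsilon> u + p\<epsilon> v \<le> real_of_int (w u v) + \<epsilon>"
    and tight: "\<forall>(u, v)\<in>M. \<pi>\<epsilon> u + p\<epsilon> v = real_of_int (w u v)"
    and t_range: "t \<in> {0..int n}"
    and t_avoid: "\<forall>v\<in>V. t \<noteq>
        \<lceil>(real n + 1) * (real_of_int \<lceil>p\<epsilon> v\<rceil> - p\<epsilon> v)\<rceil> mod (int n + 1)"
    and p_def: "\<forall>v\<in>V. p v = \<lfloor>p\<epsilon> v + real_of_int t / (real n + 1)\<rfloor>"
    and \<pi>_def: "\<forall>(u, v)\<in>M. \<pi> u = w u v - p v"
  shows "dual_optimal U V E w (\<lambda>u. real_of_int (\<pi> u)) (\<lambda>v. real_of_int (p v))"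
proof -
  have "\<epsilon> \<le> frac (p\<epsilon> v + real_of_int t / (real n + 1))" if "v \<in> V" for v
  proof -
    have "1 / (real n + 1) \<le> frac (p\<epsilon> v + real_of_int t / (real n + 1))"
      using frac_shift_ge[of "Suc n" t "p\<epsilon> v"] t_range t_avoid that by (simp add: add.commute)
    then show ?thesis using eps_le by linarith
  qed
  then have "dual_feasible E w (\<lambda>u. real_of_int (\<pi> u)) (\<lambda>v. real_of_int (p v))"
    using rounded_dual_feasible[OF _ M approx tight _ p_def \<pi>_def] G
    unfolding bipartite_graph_def by blast
  moreover have "\<forall>(u, v)\<in>M. real_of_int (\<pi> u) + real_of_int (p v) = real_of_int (w u v)"
    using \<pi>_def by auto
  ultimately show ?thesis
    using dual_optimal_if_tight_on_perfect_matching[OF G M] by blast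
qed

end
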